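(* Let $\mathcal{Q}$ be a parabolic subset of $\mathcal{R}$, $\mathrm{s}$ an involution of $\mathcal{R}$, and $C$ a $V$-fit Weyl chamber for $(\mathcal{Q},\mathrm{s})$. Set $\Phi_C=\mathcal{B}(C)\cap\mathcal{Q}^n$ and $\Phi_C^{\mathrm{s},+}=\{\alpha\in\Phi_C\mid\mathrm{s}(\alpha)\in\mathcal{R}^+(C)\}$. Then $\mathcal{Q}_{\Phi_C^{\mathrm{s},+}}$ is the largest closed subset of $\mathcal{R}$ which contains $\mathcal{Q}$ and is contained in $\mathcal{Q}\cup\mathrm{s}(\mathcal{Q})$. Moreover the following are equivalent: (a) $(\mathcal{Q},\mathrm{s})$ is Levi-nondegenerate; (b) $\mathrm{s}(\Phi_C)\subseteq\mathcal{R}^+(C)$; (c) $\mathrm{s}(\Phi_C)\subseteq\mathcal{Q}^n$.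
   Context: $\mathcal{R}$ is a reduced root system in a Euclidean space $V$. Closed subset: $\alpha,\beta\in\mathcal{Q}$, $\alpha+\beta\in\mathcal{R}\Rightarrow\alpha+\beta\in\mathcal{Q}$; parabolic: closed with $\mathcal{Q}\cup(-\mathcal{Q})=\mathcal{R}$. $\mathcal{Q}^r=\{\alpha\in\mathcal{Q}\mid-\alpha\in\mathcal{Q}\}$, $\mathcal{Q}^n=\{\alpha\in\mathcal{Q}\mid-\alpha\notin\mathcal{Q}\}$. For a Weyl chamber $C$: $\mathcal{R}^\pm(C)$ positive/negative roots, $\mathcal{B}(C)$ simple roots, $\mathrm{supp}_C(\alpha)$ the set of simple roots with nonzero coefficient in $\alpha$. $C$ is admissible for $\mathcal{Q}$ if $\mathcal{R}^+(C)\subseteq\mathcal{Q}$. For $\Phi\subseteq\mathcal{B}(C)$, $\mathcal{Q}_\Phi=\mathcal{R}^+(C)\cup\{\alpha\in\mathcal{R}^-(C)\mid\mathrm{supp}_C(\alpha)\cap\Phi=\emptyset\}$. An involution of $\mathcal{R}$ is a linear isometric involution $\mathrm{s}$ of $V$ with $\mathrm{s}(\mathcal{R})=\mathcal{R}$; a root $\alpha$ is real if $\mathrm{s}(\alpha)=\alpha$, imaginary if $\mathrm{s}(\alpha)=-\alpha$, complex otherwise. An admissible chamber $C$ is $V$-fit for $(\mathcal{Q},\mathrm{s})$ if $\mathrm{s}(\alpha)\in\mathcal{R}^-(C)$ for every complex $\alpha\in\mathcal{B}(C)\setminus\Phi_C$. The pair $(\mathcal{Q},\mathrm{s})$ is Levi-nondegenerate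 if there is no parabolic $\mathcal{Q}'$ with $\mathcal{Q}\subsetneq\mathcal{Q}'\subseteq\mathcal{Q}\cup\mathrm{s}(\mathcal{Q})$. *)

theory Defs
  imports "HOL-Analysis.Analysis"
begin

definition reflection_along :: "'a::euclidean_space \<Rightarrow> 'a \<Rightarrow> 'a" where
  "reflection_along \<alpha> x = x - (2 * (x \<bullet> \<alpha>) / (\<alpha> \<bullet> \<alpha>)) *\<^sub>R \<alpha>"

definition root_system :: "'a::euclidean_space set \<Rightarrow> bool" where
  "root_system R \<longleftrightarrow>
     finite R \<and> 0 \<notin> R \<and> span R = UNIV \<and>
     (\<forall>\<alpha>\<in>R. reflection_along \<alpha> ` R = R) \<and>
     (\<forall>\<alpha>\<in>R. \<forall>\<beta>\<in>R. 2 * (\<beta> \<bullet> \<alpha>) / (\<alpha> \<bullet> \<alpha>) \<in> \<int>)"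

definition reduced_root_system :: "'a::euclidean_space set \<Rightarrow> bool" where
  "reduced_root_system R \<longleftrightarrow> root_system R \<and>
     (\<forall>\<alpha>\<in>R. \<forall>c::real. c *\<^sub>R \<alpha> \<in> R \<longrightarrow> c = 1 \<or> c = -1)"

definition closed_subset :: "'a::euclidean_space set \<Rightarrow> 'a set \<Rightarrow> bool" where
  "closed_subset R Q \<longleftrightarrow> Q \<subseteq> R \<and>
     (\<forall>\<alpha>\<in>Q. \<forall>\<beta>\<in>Q. \<alpha> + \<beta> \<in> R \<longrightarrow> \<alpha> + \<beta> \<in> Q)"

definition parabolic_subset :: "'a::euclidean_space set \<Rightarrow> 'a set \<Rightarrow> bool" where
  "parabolic_subset R Q \<longleftrightarrow> closed_subset R Q \<and> Q \<union> uminus ` Q = R"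

definition reductive_part :: "'a::euclidean_space set \<Rightarrow> 'a set" where
  "reductive_part Q = {\<alpha>\<in>Q. - \<alpha> \<in> Q}"

definition nilpotent_part :: "'a::euclidean_space set \<Rightarrow> 'a set" where
  "nilpotent_part Q = {\<alpha>\<in>Q. - \<alpha> \<notin> Q}"

definition weyl_chamber :: "'a::euclidean_space set \<Rightarrow> 'a set \<Rightarrow> bool" where
  "weyl_chamber R C \<longleftrightarrow> C \<in> components {x. \<forall>\<alpha>\<in>R. \<alpha> \<bullet> x \<noteq> 0}"

definition pos_roots :: "'a::euclidean_space set \<Rightarrow> 'a set \<Rightarrow> 'a set" where
  "pos_roots R C = {\<alpha>\<in>R. \<forall>x\<in>C. \<alpha> \<bullet> x > 0}"

definition neg_roots :: "'a::euclidean_space set \<Rightarrow> 'a set \<Rightarrow> 'a set" where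
  "neg_roots R C = {\<alpha>\<in>R. \<forall>x\<in>C. \<alpha> \<bullet> x < 0}"

definition simple_roots :: "'a::euclidean_space set \<Rightarrow> 'a set \<Rightarrow> 'a set" where
  "simple_roots R C = {\<alpha>\<in>pos_roots R C.
      \<not> (\<exists>\<beta>\<in>pos_roots R C. \<exists>\<gamma>\<in>pos_roots R C. \<alpha> = \<beta> + \<gamma>)}"

definition simple_coeffs :: "'a::euclidean_space set \<Rightarrow> 'a set \<Rightarrow> 'a \<Rightarrow> 'a \<Rightarrow> real" where
  "simple_coeffs R C \<alpha> = (THE c. (\<forall>\<beta>. \<beta> \<notin> simple_roots R C \<longrightarrow> c \<beta> = 0) \<and>
      \<alpha> = (\<Sum>\<beta>\<in>simple_roots R C. c \<beta> *\<^sub>R \<beta>))"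

definition supp :: "'a::euclidean_space set \<Rightarrow> 'a set \<Rightarrow> 'a \<Rightarrow> 'a set" where
  "supp R C \<alpha> = {\<beta>\<in>simple_roots R C. simple_coeffs R C \<alpha> \<beta> \<noteq> 0}"

definition admissible :: "'a::euclidean_space set \<Rightarrow> 'a set \<Rightarrow> 'a set \<Rightarrow> bool" where
  "admissible R Q C \<longleftrightarrow> weyl_chamber R C \<and> pos_roots R C \<subseteq> Q"

definition Q_Phi :: "'a::euclidean_space set \<Rightarrow> 'a set \<Rightarrow> 'a set \<Rightarrow> 'a set" where
  "Q_Phi R C \<Phi> = pos_roots R C \<union> {\<alpha>\<in>neg_roots R C. supp R C \<alpha> \<inter> \<Phi> = {}}"

definition root_involution :: "'a::euclidean_space set \<Rightarrow> ('a \<Rightarrow> 'a) \<Rightarrow> bool" where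
  "root_involution R s \<longleftrightarrow> linear s \<and> (\<forall>x. norm (s x) = norm x) \<and>
     (\<forall>x. s (s x) = x) \<and> s ` R = R"

definition real_root :: "('a::euclidean_space \<Rightarrow> 'a) \<Rightarrow> 'a \<Rightarrow> bool" where
  "real_root s \<alpha> \<longleftrightarrow> s \<alpha> = \<alpha>"

definition imaginary_root :: "('a::euclidean_space \<Rightarrow> 'a) \<Rightarrow> 'a \<Rightarrow> bool" where
  "imaginary_root s \<alpha> \<longleftrightarrow> s \<alpha> = - \<alpha>"

definition complex_root :: "('a::euclidean_space \<Rightarrow> 'a) \<Rightarrow> 'a \<Rightarrow> bool" where
  "complex_root s \<alpha> \<longleftrightarrow> \<not> real_root s \<alpha> \<and> \<not> imaginary_root s \<alpha>"

definition Phi_C :: "'a::euclidean_space set \<Rightarrow> 'a set \<Rightarrow> 'a set \<Rightarrow> 'a set" where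
  "Phi_C R Q C = simple_roots R C \<inter> nilpotent_part Q"

definition V_fit :: "'a::euclidean_space set \<Rightarrow> 'a set \<Rightarrow> ('a \<Rightarrow> 'a) \<Rightarrow> 'a set \<Rightarrow> bool" where
  "V_fit R Q s C \<longleftrightarrow> admissible R Q C \<and>
     (\<forall>\<alpha>\<in>simple_roots R C - Phi_C R Q C. complex_root s \<alpha> \<longrightarrow> s \<alpha> \<in> neg_roots R C)"

definition levi_nondegenerate :: "'a::euclidean_space set \<Rightarrow> 'a set \<Rightarrow> ('a \<Rightarrow> 'a) \<Rightarrow> bool" where
  "levi_nondegenerate R Q s \<longleftrightarrow>
     \<not> (\<exists>Q'. parabolic_subset R Q' \<and> Q \<subset> Q' \<and> Q' \<subseteq> Q \<union> s ` Q)"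

end

theory Submission
  imports Defs
begin

text \<open>A positive root that is not simple is a sum of two
  positive roots of smaller height, so the simple roots span; being pairwise obtuse they form
  a basis, in which positive roots have nonnegative coordinates. A closed set \<open>Q\<close> containing
  the positive roots is recovered as \<open>Q = Q\<^bsub>\<Phi>\<^sub>C\<^esub>\<close>, because a negative root of \<open>Q\<close> drags the
  negatives of all simple roots of its support into \<open>Q\<close>.

  Write \<open>\<Phi>\<^sup>+\<close> for \<open>\<Phi>\<^sub>C\<^sup>s\<^sup>,\<^sup>+\<close>. For a simple root \<open>\<beta> \<notin> \<Phi>\<^sup>+\<close> the root \<open>s(\<beta>)\<close> is negative
  (if \<open>\<beta> \<in> \<Phi>\<^sub>C\<close>, or if \<open>\<beta>\<close> is complex: this is \<open>V\<close>-fitness) or equal to \<open>\<plusminus>\<beta>\<close>, so it has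
  nonpositive \<open>\<Phi>\<^sub>C\<close>-coordinates; by linearity so does \<open>s(\<delta>)\<close> for every positive root \<open>\<delta>\<close>
  whose support avoids \<open>\<Phi>\<^sup>+\<close>. For \<open>\<delta> = s(\<phi>)\<close> with \<open>\<phi> \<in> \<Phi>\<^sup>+\<close> this gives \<open>-s(\<phi>) \<notin> Q\<close>, so a
  closed \<open>Q'\<close> with \<open>Q \<subseteq> Q' \<subseteq> Q \<union> s(Q)\<close> cannot contain \<open>-\<phi>\<close>: this is maximality. For
  \<open>\<delta> = -\<alpha>\<close> with \<open>\<alpha>\<close> a negative root of \<open>Q\<^bsub>\<Phi>\<^sup>+\<^esub>\<close> it gives \<open>-s(\<delta>) \<in> Q\<close>, i.e. \<open>\<alpha> \<in> s(Q)\<close>.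
  Finally \<open>Q\<^bsub>\<Phi>\<^sup>+\<^esub>\<close> is parabolic, and strictly larger than \<open>Q\<close> exactly when \<open>s\<close> maps some
  root of \<open>\<Phi>\<^sub>C\<close> to a negative root.\<close>

lemma root_system_reflection_mem:
  assumes "root_system R" and "\<alpha> \<in> R" and "\<beta> \<in> R"
  shows "reflection_along \<alpha> \<beta> \<in> R"
  using assms unfolding root_system_def by blast

lemma root_system_uminus:
  assumes "root_system R" and "\<alpha> \<in> R"
  shows "- \<alpha> \<in> R"
proof -
  have "\<alpha> \<bullet> \<alpha> \<noteq> 0"
    using assms by (auto simp: root_system_def)
  then have "reflection_along \<alpha> \<alpha> = - \<alpha>"
    by (simp add: reflection_along_def scaleR_2)
  then show ?thesis
    using root_system_reflection_mem[OF assms assms(2)] by simp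
qed

lemma root_system_diff_mem:
  assumes R: "root_system R" and "\<alpha> \<in> R" "\<beta> \<in> R"
    and acute: "\<alpha> \<bullet> \<beta> > 0" and "\<alpha> \<noteq> \<beta>"
  shows "\<alpha> - \<beta> \<in> R"
proof -
  have aa: "\<alpha> \<bullet> \<alpha> > 0" and bb: "\<beta> \<bullet> \<beta> > 0"
    using assms by (auto simp: root_system_def)
  define p where "p = 2 * (\<alpha> \<bullet> \<beta>) / (\<beta> \<bullet> \<beta>)"
  define q where "q = 2 * (\<beta> \<bullet> \<alpha>) / (\<alpha> \<bullet> \<alpha>)"
  obtain i j :: int where i: "p = of_int i" and j: "q = of_int j"
    using assms unfolding p_def q_def root_system_def by (metis Ints_cases)
  have "p > 0" "q > 0"
    using acute aa bb by (auto simp: p_def q_def inner_commute)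
  then have "i \<ge> 1" "j \<ge> 1"
    using i j by auto
  have "p * q = 4 * (\<alpha> \<bullet> \<beta>)\<^sup>2 / ((\<alpha> \<bullet> \<alpha>) * (\<beta> \<bullet> \<beta>))"
    by (simp add: p_def q_def inner_commute power2_eq_square)
  also have "\<dots> \<le> 4"
    using Cauchy_Schwarz_ineq[of \<alpha> \<beta>] aa bb by (simp add: divide_le_eq)
  finally have "real_of_int (i * j) \<le> 4"
    using i j by simp
  then have "i * j \<le> 4"
    by (simp only: of_int_le_numeral_iff)
  moreover have "2 * j \<le> i * j" if "i \<ge> 2"
    using that \<open>j \<ge> 1\<close> by (simp add: mult_right_mono)
  moreover have "i * 2 \<le> i * j" if "j \<ge> 2"
    using that \<open>i \<ge> 1\<close> by (simp add: mult_left_mono)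
  ultimately consider "i = 1" | "j = 1" | "i = 2" "j = 2"
    using \<open>i \<ge> 1\<close> \<open>j \<ge> 1\<close> by linarith
  then show ?thesis
  proof cases
    case 1
    then have "reflection_along \<beta> \<alpha> = \<alpha> - \<beta>"
      using i acute by (simp add: reflection_along_def p_def)
    then show ?thesis
      using root_system_reflection_mem[OF R \<open>\<beta> \<in> R\<close> \<open>\<alpha> \<in> R\<close>] by simp
  next
    case 2
    then have "reflection_along \<alpha> \<beta> = - (\<alpha> - \<beta>)"
      using j acute by (simp add: reflection_along_def q_def inner_commute)
    then show ?thesis
      using root_system_uminus[OF R root_system_reflection_mem[OF R \<open>\<alpha> \<in> R\<close> \<open>\<beta> \<in> R\<close>]]
      by simp
  next
    case 3
    then have "\<alpha> \<bullet> \<beta> = \<beta> \<bullet> \<beta>" "\<alpha> \<bullet> \<beta> = \<alpha> \<bullet> \<alpha>"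
      using i j aa bb by (auto simp: p_def q_def inner_commute divide_eq_eq)
    then have "(\<alpha> - \<beta>) \<bullet> (\<alpha> - \<beta>) = 0"
      by (simp add: inner_diff_left inner_diff_right inner_commute)
    with \<open>\<alpha> \<noteq> \<beta>\<close> show ?thesis
      by simp
  qed
qed

lemma obtuse_combinations_eq_imp_zero:
  fixes S :: "'a::real_inner set"
  assumes "finite S"
    and obtuse: "\<And>a b. a \<in> S \<Longrightarrow> b \<in> S \<Longrightarrow> a \<noteq> b \<Longrightarrow> a \<bullet> b \<le> 0"
    and pos: "\<And>a. a \<in> S \<Longrightarrow> a \<bullet> x > 0"
    and cd: "\<And>a. a \<in> S \<Longrightarrow> c a \<ge> 0 \<and> d a \<ge> 0 \<and> c a * d a = 0"
    and eq: "(\<Sum>a\<in>S. c a *\<^sub>R a) = (\<Sum>a\<in>S. d a *\<^sub>R a)"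
  shows "\<forall>a\<in>S. c a = 0"
proof -
  define w where "w = (\<Sum>a\<in>S. c a *\<^sub>R a)"
  have "w \<bullet> w = (\<Sum>b\<in>S. \<Sum>a\<in>S. d b * (c a * (a \<bullet> b)))"
    unfolding w_def by (subst (2) eq) (simp add: inner_sum_left inner_sum_right sum_distrib_left mult.assoc)
  also have "\<dots> \<le> 0"
  proof (intro sum_nonpos)
    fix a b assume "a \<in> S" "b \<in> S"
    show "d a * (c b * (b \<bullet> a)) \<le> 0"
    proof (cases "a = b")
      case True
      have "d a * (c a * (a \<bullet> a)) = (c a * d a) * (a \<bullet> a)"
        by (simp add: ac_simps)
      then show ?thesis
        using True cd[OF \<open>a \<in> S\<close>] by auto
    next
      case False
      then show ?thesis
        using obtuse[of b a] cd[of a] cd[of b] \<open>a \<in> S\<close> \<open>b \<in> S\<close>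
        by (simp add: mult_nonneg_nonpos)
    qed
  qed
  finally have "w = 0"
    by (metis inner_gt_zero_iff not_le)
  moreover have "w \<bullet> x = (\<Sum>a\<in>S. c a * (a \<bullet> x))"
    unfolding w_def by (simp add: inner_sum_left)
  ultimately have "(\<Sum>a\<in>S. c a * (a \<bullet> x)) = 0"
    by simp
  moreover have "\<forall>a\<in>S. c a * (a \<bullet> x) \<ge> 0"
    using cd pos by (simp add: less_imp_le)
  ultimately show ?thesis
    using pos \<open>finite S\<close> by (fastforce simp: sum_nonneg_eq_0_iff)
qed

lemma independent_if_pairwise_obtuse:
  fixes S :: "'a::real_inner set"
  assumes "finite S"
    and obtuse: "\<And>a b. a \<in> S \<Longrightarrow> b \<in> S \<Longrightarrow> a \<noteq> b \<Longrightarrow> a \<bullet> b \<le> 0"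
    and pos: "\<And>a. a \<in> S \<Longrightarrow> a \<bullet> x > 0"
  shows "independent S"
proof
  assume "dependent S"
  then obtain u v where "v \<in> S" "u v \<noteq> 0" and u: "(\<Sum>a\<in>S. u a *\<^sub>R a) = 0"
    using dependent_finite[OF \<open>finite S\<close>] by blast
  define c where "c a = max (u a) 0" for a
  define d where "d a = max (- u a) 0" for a
  have u_eq: "u a = c a - d a" for a
    by (simp add: c_def d_def max_def)
  have cd: "c a \<ge> 0 \<and> d a \<ge> 0 \<and> c a * d a = 0"
    and dc: "d a \<ge> 0 \<and> c a \<ge> 0 \<and> d a * c a = 0" for a
    by (simp_all add: c_def d_def max_def)
  have "(\<Sum>a\<in>S. c a *\<^sub>R a) - (\<Sum>a\<in>S. d a *\<^sub>R a) = (\<Sum>a\<in>S. u a *\<^sub>R a)"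
    by (simp add: u_eq scaleR_diff_left sum_subtractf)
  then have eq: "(\<Sum>a\<in>S. c a *\<^sub>R a) = (\<Sum>a\<in>S. d a *\<^sub>R a)"
    using u by simp
  have "\<forall>a\<in>S. c a = 0"
    using obtuse_combinations_eq_imp_zero[OF \<open>finite S\<close> obtuse pos cd eq] .
  moreover have "\<forall>a\<in>S. d a = 0"
    using obtuse_combinations_eq_imp_zero[OF \<open>finite S\<close> obtuse pos dc eq[symmetric]] .
  ultimately show False
    using \<open>v \<in> S\<close> \<open>u v \<noteq> 0\<close> u_eq by simp
qed

lemma closed_subset_subset: "closed_subset R Q \<Longrightarrow> Q \<subseteq> R"
  by (simp add: closed_subset_def)

lemma closed_subset_add:
  "closed_subset R Q \<Longrightarrow> \<alpha> \<in> Q \<Longrightarrow> \<beta> \<in> Q \<Longrightarrow> \<alpha> + \<beta> \<in> R \<Longrightarrow> \<alpha> + \<beta> \<in> Q"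
  by (simp add: closed_subset_def)

locale root_system_chamber =
  fixes R C :: "'a::euclidean_space set"
  assumes root_system: "root_system R" and chamber: "weyl_chamber R C"
begin

abbreviation "P \<equiv> pos_roots R C"
abbreviation "N \<equiv> neg_roots R C"
abbreviation "B \<equiv> simple_roots R C"
abbreviation "coord \<equiv> simple_coeffs R C"

definition chamber_point :: 'a where
  "chamber_point = (SOME x. x \<in> C)"

lemma chamber_point_in: "chamber_point \<in> C"
proof -
  have "C \<noteq> {}"
    using chamber in_components_nonempty unfolding weyl_chamber_def by blast
  then show ?thesis
    unfolding chamber_point_def by (simp add: some_in_eq)
qed

lemma chamber_avoids_walls: "\<alpha> \<in> R \<Longrightarrow> x \<in> C \<Longrightarrow> \<alpha> \<bullet> x \<noteq> 0"
  using chamber in_components_subset unfolding weyl_chamber_def by blast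

lemma inner_pos_on_chamber:
  assumes "\<alpha> \<in> R" "x \<in> C" "y \<in> C" "\<alpha> \<bullet> x > 0"
  shows "\<alpha> \<bullet> y > 0"
proof (rule ccontr)
  assume "\<not> \<alpha> \<bullet> y > 0"
  moreover have "connected C"
    using chamber in_components_connected unfolding weyl_chamber_def by blast
  ultimately obtain z where "z \<in> C" "\<alpha> \<bullet> z = 0"
    using connected_ivt_hyperplane[of C y x \<alpha> 0] assms by force
  with \<open>\<alpha> \<in> R\<close> show False
    using chamber_avoids_walls by blast
qed

lemma pos_roots_iff: "\<alpha> \<in> P \<longleftrightarrow> \<alpha> \<in> R \<and> \<alpha> \<bullet> chamber_point > 0"
  unfolding pos_roots_def using inner_pos_on_chamber chamber_point_in by blast

lemma uminus_root: "\<alpha> \<in> R \<Longrightarrow> - \<alpha> \<in> R"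
  using root_system root_system_uminus by blast

lemma neg_roots_iff: "\<alpha> \<in> N \<longleftrightarrow> \<alpha> \<in> R \<and> \<alpha> \<bullet> chamber_point < 0"
proof -
  have "\<alpha> \<bullet> x < 0" if "\<alpha> \<in> R" "\<alpha> \<bullet> chamber_point < 0" "x \<in> C" for x
    using inner_pos_on_chamber[of "- \<alpha>" chamber_point x] that chamber_point_in uminus_root
    by simp
  then show ?thesis
    unfolding neg_roots_def using chamber_point_in by blast
qed

lemma root_pos_or_neg: "\<alpha> \<in> R \<Longrightarrow> \<alpha> \<in> P \<or> \<alpha> \<in> N"
  using chamber_avoids_walls[OF _ chamber_point_in, of \<alpha>]
  by (auto simp: pos_roots_iff neg_roots_iff linorder_neq_iff)

lemma pos_not_neg: "\<alpha> \<in> P \<Longrightarrow> \<alpha> \<notin> N"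
  using pos_roots_iff neg_roots_iff by auto

lemma uminus_pos_iff: "- \<alpha> \<in> P \<longleftrightarrow> \<alpha> \<in> N"
  using uminus_root[of \<alpha>] uminus_root[of "- \<alpha>"] by (auto simp: pos_roots_iff neg_roots_iff)

lemma uminus_neg_iff: "- \<alpha> \<in> N \<longleftrightarrow> \<alpha> \<in> P"
  using uminus_pos_iff[of "- \<alpha>"] by simp

lemma pos_roots_subset: "P \<subseteq> R"
  unfolding pos_roots_def by auto

lemma neg_roots_subset: "N \<subseteq> R"
  unfolding neg_roots_def by auto

lemma simple_roots_subset: "B \<subseteq> P"
  unfolding simple_roots_def by auto

lemma finite_roots: "finite R"
  using root_system by (simp add: root_system_def)

lemma finite_simple_roots: "finite B"
  using simple_roots_subset pos_roots_subset by (blast intro: finite_subset[OF _ finite_roots])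

lemma simple_roots_obtuse:
  assumes "\<alpha> \<in> B" "\<beta> \<in> B" "\<alpha> \<noteq> \<beta>"
  shows "\<alpha> \<bullet> \<beta> \<le> 0"
proof (rule ccontr)
  assume "\<not> \<alpha> \<bullet> \<beta> \<le> 0"
  then have "\<alpha> - \<beta> \<in> R"
    using assms simple_roots_subset pos_roots_subset
    by (intro root_system_diff_mem[OF root_system]) auto
  then consider "\<alpha> - \<beta> \<in> P" | "\<beta> - \<alpha> \<in> P"
    using root_pos_or_neg uminus_pos_iff[of "\<alpha> - \<beta>"] by auto
  then show False
  proof cases
    case 1
    have "\<alpha> = \<beta> + (\<alpha> - \<beta>)" by simp
    with 1 assms show False
      using simple_roots_subset unfolding simple_roots_def by blast
  next
    case 2
    have "\<beta> = \<alpha> + (\<beta> - \<alpha>)" by simp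
    with 2 assms show False
      using simple_roots_subset unfolding simple_roots_def by blast
  qed
qed

lemma pos_roots_induct [consumes 1, case_names simple add]:
  assumes "\<gamma> \<in> P"
    and simple: "\<And>\<beta>. \<beta> \<in> B \<Longrightarrow> Prop \<beta>"
    and add: "\<And>\<beta>1 \<beta>2. \<beta>1 \<in> P \<Longrightarrow> \<beta>2 \<in> P \<Longrightarrow> \<beta>1 + \<beta>2 \<in> P \<Longrightarrow>
                Prop \<beta>1 \<Longrightarrow> Prop \<beta>2 \<Longrightarrow> Prop (\<beta>1 + \<beta>2)"
  shows "Prop \<gamma>"
  using assms(1)
proof (induction "card {\<delta>\<in>R. \<delta> \<bullet> chamber_point < \<gamma> \<bullet> chamber_point}" arbitrary: \<gamma>
    rule: less_induct)
  case less
  show ?case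
  proof (cases "\<gamma> \<in> B")
    case True
    then show ?thesis by (rule simple)
  next
    case False
    then obtain \<beta>1 \<beta>2 where \<beta>: "\<beta>1 \<in> P" "\<beta>2 \<in> P" and \<gamma>: "\<gamma> = \<beta>1 + \<beta>2"
      using less.prems unfolding simple_roots_def by auto
    have "card {\<delta>\<in>R. \<delta> \<bullet> chamber_point < \<beta> \<bullet> chamber_point}
        < card {\<delta>\<in>R. \<delta> \<bullet> chamber_point < \<gamma> \<bullet> chamber_point}" if "\<beta> \<in> {\<beta>1, \<beta>2}" for \<beta>
    proof (rule psubset_card_mono)
      show "finite {\<delta>\<in>R. \<delta> \<bullet> chamber_point < \<gamma> \<bullet> chamber_point}"
        using finite_roots by simp
      have "\<beta> \<bullet> chamber_point < \<gamma> \<bullet> chamber_point"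
        using that \<beta> \<gamma> pos_roots_iff by (auto simp: inner_add_left)
      then show "{\<delta>\<in>R. \<delta> \<bullet> chamber_point < \<beta> \<bullet> chamber_point}
          \<subset> {\<delta>\<in>R. \<delta> \<bullet> chamber_point < \<gamma> \<bullet> chamber_point}"
        using that \<beta> pos_roots_subset by auto
    qed
    then have "Prop \<beta>1" "Prop \<beta>2"
      using less.hyps \<beta> by auto
    then show ?thesis
      using add \<beta> less.prems \<gamma> by blast
  qed
qed

lemma span_simple_roots: "span B = UNIV"
proof -
  have pos: "\<gamma> \<in> span B" if "\<gamma> \<in> P" for \<gamma>
    using that by (induction rule: pos_roots_induct) (simp_all add: span_base span_add)
  have "R \<subseteq> span B"
  proof
    fix \<gamma> assume "\<gamma> \<in> R"
    then consider "\<gamma> \<in> P" | "- \<gamma> \<in> P"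
      using root_pos_or_neg uminus_pos_iff by blast
    then show "\<gamma> \<in> span B"
      by cases (use pos span_neg[of "- \<gamma>"] in auto)
  qed
  then have "span R \<subseteq> span B"
    using span_mono span_span by blast
  then show ?thesis
    using root_system by (auto simp: root_system_def)
qed

lemma independent_simple_roots: "independent B"
proof (rule independent_if_pairwise_obtuse[OF finite_simple_roots simple_roots_obtuse])
  show "\<alpha> \<bullet> chamber_point > 0" if "\<alpha> \<in> B" for \<alpha>
    using that simple_roots_subset pos_roots_iff by blast
qed

lemma coord_eq_representation: "coord v = representation B v"
  unfolding simple_coeffs_def
proof (rule the_equality)
  show "(\<forall>\<beta>. \<beta> \<notin> B \<longrightarrow> representation B v \<beta> = 0) \<and> v = (\<Sum>\<beta>\<in>B. representation B v \<beta> *\<^sub>R \<beta>)"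
    using representation_ne_zero sum_representation_eq[OF independent_simple_roots _ finite_simple_roots]
      span_simple_roots by auto
next
  fix c assume c: "(\<forall>\<beta>. \<beta> \<notin> B \<longrightarrow> c \<beta> = 0) \<and> v = (\<Sum>\<beta>\<in>B. c \<beta> *\<^sub>R \<beta>)"
  then have supp_c: "{\<beta>. c \<beta> \<noteq> 0} \<subseteq> B"
    by auto
  show "c = representation B v"
  proof (rule sym, rule representation_eqI[OF independent_simple_roots])
    show "v \<in> span B"
      using span_simple_roots by simp
    show "c \<beta> \<noteq> 0 \<Longrightarrow> \<beta> \<in> B" for \<beta>
      using supp_c by auto
    show "finite {\<beta>. c \<beta> \<noteq> 0}"
      using supp_c finite_simple_roots finite_subset by blast
    have "(\<Sum>\<beta> | c \<beta> \<noteq> 0. c \<beta> *\<^sub>R \<beta>) = (\<Sum>\<beta>\<in>B. c \<beta> *\<^sub>R \<beta>)"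
      by (rule sum.mono_neutral_left[OF finite_simple_roots supp_c]) auto
    then show "(\<Sum>\<beta> | c \<beta> \<noteq> 0. c \<beta> *\<^sub>R \<beta>) = v"
      using c by simp
  qed
qed

lemma linear_coord: "linear (\<lambda>v. coord v \<beta>)"
  by (rule linearI)
    (simp_all add: coord_eq_representation representation_add representation_scale
      independent_simple_roots span_simple_roots)

lemma coord_add: "coord (u + v) \<beta> = coord u \<beta> + coord v \<beta>"
  using linear_add[OF linear_coord] .

lemma coord_uminus: "coord (- v) \<beta> = - coord v \<beta>"
  using linear_neg[OF linear_coord] .

lemma coord_simple: "\<alpha> \<in> B \<Longrightarrow> coord \<alpha> \<beta> = (if \<beta> = \<alpha> then 1 else 0)"
  by (simp add: coord_eq_representation representation_basis[OF independent_simple_roots])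

lemma coord_nonzero_simple: "coord v \<beta> \<noteq> 0 \<Longrightarrow> \<beta> \<in> B"
  using representation_ne_zero by (simp add: coord_eq_representation)

lemma coord_pos_nonneg: "\<gamma> \<in> P \<Longrightarrow> coord \<gamma> \<beta> \<ge> 0"
  by (induction rule: pos_roots_induct) (simp_all add: coord_simple coord_add)

lemma coord_neg_nonpos: "\<gamma> \<in> N \<Longrightarrow> coord \<gamma> \<beta> \<le> 0"
  using coord_pos_nonneg[of "- \<gamma>" \<beta>] uminus_pos_iff by (simp add: coord_uminus)

lemma mem_supp_iff: "\<beta> \<in> supp R C \<alpha> \<longleftrightarrow> coord \<alpha> \<beta> \<noteq> 0"
  unfolding supp_def using coord_nonzero_simple by blast

lemma supp_uminus: "supp R C (- \<alpha>) = supp R C \<alpha>"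
  by (simp add: supp_def coord_uminus)

lemma supp_simple: "\<alpha> \<in> B \<Longrightarrow> supp R C \<alpha> = {\<alpha>}"
  by (auto simp: mem_supp_iff coord_simple split: if_splits)

lemma supp_add_pos:
  "\<beta>1 \<in> P \<Longrightarrow> \<beta>2 \<in> P \<Longrightarrow> supp R C (\<beta>1 + \<beta>2) = supp R C \<beta>1 \<union> supp R C \<beta>2"
  using coord_pos_nonneg[of \<beta>1] coord_pos_nonneg[of \<beta>2]
  by (auto simp: mem_supp_iff coord_add add_nonneg_eq_0_iff)

lemma linear_nonpos_if_nonpos_on_supp:
  fixes f :: "'a \<Rightarrow> real"
  assumes "linear f" and "\<delta> \<in> P" and "\<And>\<beta>. \<beta> \<in> supp R C \<delta> \<Longrightarrow> f \<beta> \<le> 0"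
  shows "f \<delta> \<le> 0"
  using assms(2,3)
proof (induction rule: pos_roots_induct)
  case (simple \<beta>)
  then show ?case
    by (simp add: supp_simple)
next
  case (add \<beta>1 \<beta>2)
  then show ?case
    by (simp add: supp_add_pos linear_add[OF \<open>linear f\<close>] add_nonpos_nonpos)
qed

lemma neg_mem_Q_Phi_iff: "\<alpha> \<in> N \<Longrightarrow> \<alpha> \<in> Q_Phi R C \<Psi> \<longleftrightarrow> supp R C \<alpha> \<inter> \<Psi> = {}"
  by (auto simp: Q_Phi_def dest: pos_not_neg)

lemma pos_roots_subset_Q_Phi: "P \<subseteq> Q_Phi R C \<Psi>"
  unfolding Q_Phi_def by blast

lemma Q_Phi_antimono: "\<Psi> \<subseteq> \<Psi>' \<Longrightarrow> Q_Phi R C \<Psi>' \<subseteq> Q_Phi R C \<Psi>"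
  unfolding Q_Phi_def by blast

lemma coord_Q_Phi_nonneg:
  assumes "\<alpha> \<in> Q_Phi R C \<Psi>" "\<psi> \<in> \<Psi>"
  shows "coord \<alpha> \<psi> \<ge> 0"
proof (cases "\<alpha> \<in> P")
  case False
  then have "\<psi> \<notin> supp R C \<alpha>"
    using assms unfolding Q_Phi_def by blast
  then show ?thesis
    by (simp add: mem_supp_iff)
qed (rule coord_pos_nonneg)

lemma closed_Q_Phi: "closed_subset R (Q_Phi R C \<Psi>)"
  unfolding closed_subset_def
proof (intro conjI ballI impI)
  show "Q_Phi R C \<Psi> \<subseteq> R"
    unfolding Q_Phi_def using pos_roots_subset neg_roots_subset by blast
  fix \<alpha> \<beta> assume "\<alpha> \<in> Q_Phi R C \<Psi>" "\<beta> \<in> Q_Phi R C \<Psi>" "\<alpha> + \<beta> \<in> R"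
  \<comment> \<open>on \<open>\<Psi>\<close> the coordinates of \<open>\<alpha>\<close> and \<open>\<beta>\<close> are \<open>\<ge> 0\<close>, those of a negative root \<open>\<le> 0\<close>\<close>
  have "coord (\<alpha> + \<beta>) \<psi> = 0" if "\<alpha> + \<beta> \<in> N" "\<psi> \<in> \<Psi>" for \<psi>
    using that coord_neg_nonpos coord_Q_Phi_nonneg[OF \<open>\<alpha> \<in> Q_Phi R C \<Psi>\<close>]
      coord_Q_Phi_nonneg[OF \<open>\<beta> \<in> Q_Phi R C \<Psi>\<close>] coord_add
    by (metis add_nonneg_nonneg order_antisym)
  then show "\<alpha> + \<beta> \<in> Q_Phi R C \<Psi>"
    using root_pos_or_neg[OF \<open>\<alpha> + \<beta> \<in> R\<close>] pos_roots_subset_Q_Phi neg_mem_Q_Phi_iff mem_supp_iff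
    by blast
qed

lemma parabolic_if_closed_pos:
  assumes "closed_subset R Q" and "P \<subseteq> Q"
  shows "parabolic_subset R Q"
  unfolding parabolic_subset_def
proof (intro conjI assms(1) equalityI subsetI)
  fix \<alpha> assume "\<alpha> \<in> Q \<union> uminus ` Q"
  then show "\<alpha> \<in> R"
    using closed_subset_subset[OF assms(1)] uminus_root by auto
next
  fix \<alpha> assume "\<alpha> \<in> R"
  then consider "\<alpha> \<in> P" | "- \<alpha> \<in> P"
    using root_pos_or_neg uminus_pos_iff by blast
  then show "\<alpha> \<in> Q \<union> uminus ` Q"
    by cases (use assms(2) in \<open>auto intro: image_eqI[of \<alpha> uminus "- \<alpha>"]\<close>)
qed

lemma neg_supp_mem_closed:
  assumes Q: "closed_subset R Q" "P \<subseteq> Q"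
    and "\<alpha> \<in> Q" "\<alpha> \<in> N" "\<beta> \<in> supp R C \<alpha>"
  shows "- \<beta> \<in> Q"
proof -
  have "- \<beta> \<in> Q" if "\<gamma> \<in> P" "- \<gamma> \<in> Q" "\<beta> \<in> supp R C \<gamma>" for \<gamma> \<beta>
    using that
  proof (induction arbitrary: \<beta> rule: pos_roots_induct)
    case (simple \<gamma>)
    then show ?case
      by (simp add: supp_simple)
  next
    case (add \<beta>1 \<beta>2)
    have "- \<beta>1 = - (\<beta>1 + \<beta>2) + \<beta>2" "- \<beta>2 = - (\<beta>1 + \<beta>2) + \<beta>1"
      by simp_all
    then have "- \<beta>1 \<in> Q" "- \<beta>2 \<in> Q"
      using add.hyps add.prems(1) Q pos_roots_subset uminus_root
      by (metis closed_subset_add subsetD)+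
    then show ?case
      using add supp_add_pos by blast
  qed
  then show ?thesis
    using assms uminus_pos_iff supp_uminus by (metis minus_minus)
qed

lemma uminus_mem_if_supp_disjoint:
  assumes Q: "closed_subset R Q" "P \<subseteq> Q"
    and "\<gamma> \<in> P" "supp R C \<gamma> \<inter> Phi_C R Q C = {}"
  shows "- \<gamma> \<in> Q"
  using assms(3,4)
proof (induction rule: pos_roots_induct)
  case (simple \<beta>)
  then show ?case
    using Q(2) simple_roots_subset
    by (auto simp: supp_simple Phi_C_def nilpotent_part_def)
next
  case (add \<beta>1 \<beta>2)
  then have "- \<beta>1 \<in> Q" "- \<beta>2 \<in> Q"
    by (auto simp: supp_add_pos)
  moreover have "- \<beta>1 + - \<beta>2 \<in> R"
    using add.hyps uminus_root pos_roots_subset by (metis minus_add_distrib subsetD)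
  ultimately have "- \<beta>1 + - \<beta>2 \<in> Q"
    by (rule closed_subset_add[OF Q(1)])
  then show ?case
    by simp
qed

lemma Q_Phi_Phi_C_eq:
  assumes Q: "closed_subset R Q" "P \<subseteq> Q"
  shows "Q_Phi R C (Phi_C R Q C) = Q"
proof (intro equalityI subsetI)
  fix \<alpha> assume \<alpha>: "\<alpha> \<in> Q_Phi R C (Phi_C R Q C)"
  show "\<alpha> \<in> Q"
  proof (cases "\<alpha> \<in> P")
    case False
    with \<alpha> have "\<alpha> \<in> N" "supp R C (- \<alpha>) \<inter> Phi_C R Q C = {}"
      unfolding Q_Phi_def by (auto simp: supp_uminus)
    then show ?thesis
      using uminus_mem_if_supp_disjoint[OF Q, of "- \<alpha>"] uminus_pos_iff by simp
  qed (use Q in blast)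
next
  fix \<alpha> assume "\<alpha> \<in> Q"
  then have "\<alpha> \<in> R"
    using closed_subset_subset[OF Q(1)] by blast
  moreover have "supp R C \<alpha> \<inter> Phi_C R Q C = {}" if "\<alpha> \<in> N"
    using neg_supp_mem_closed[OF Q \<open>\<alpha> \<in> Q\<close> that]
    by (auto simp: Phi_C_def nilpotent_part_def)
  ultimately show "\<alpha> \<in> Q_Phi R C (Phi_C R Q C)"
    using root_pos_or_neg pos_roots_subset_Q_Phi neg_mem_Q_Phi_iff by blast
qed

end

locale V_fit_chamber = root_system_chamber R C for R C :: "'a::euclidean_space set" +
  fixes Q :: "'a set" and s :: "'a \<Rightarrow> 'a"
  assumes closed: "closed_subset R Q"
    and involution: "root_involution R s"
    and V_fit: "V_fit R Q s C"
begin

abbreviation "\<Phi> \<equiv> Phi_C R Q C"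
abbreviation "\<Phi>pos \<equiv> {\<alpha>\<in>\<Phi>. s \<alpha> \<in> P}"

lemma pos_roots_subset_Q: "P \<subseteq> Q"
  using V_fit by (simp add: V_fit_def admissible_def)

lemma Q_Phi_eq_Q: "Q_Phi R C \<Phi> = Q"
  using Q_Phi_Phi_C_eq[OF closed pos_roots_subset_Q] .

lemma linear_s: "linear s"
  using involution by (simp add: root_involution_def)

lemma s_s: "s (s x) = x"
  using involution by (simp add: root_involution_def)

lemma s_uminus: "s (- x) = - s x"
  using linear_neg[OF linear_s] .

lemma s_root: "\<alpha> \<in> R \<Longrightarrow> s \<alpha> \<in> R"
  using involution by (auto simp: root_involution_def)

lemma mem_Phi_iff: "\<phi> \<in> \<Phi> \<longleftrightarrow> \<phi> \<in> B \<and> \<phi> \<in> Q \<and> - \<phi> \<notin> Q"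
  by (auto simp: Phi_C_def nilpotent_part_def)

lemma coord_s_simple_nonpos:
  assumes "\<phi> \<in> \<Phi>" "\<beta> \<in> B" "\<beta> \<notin> \<Phi>pos"
  shows "coord (s \<beta>) \<phi> \<le> 0"
proof -
  have "s \<beta> \<in> R"
    using assms(2) simple_roots_subset pos_roots_subset s_root by blast
  consider "\<beta> \<in> \<Phi>" | "\<beta> \<notin> \<Phi>" "complex_root s \<beta>" | "\<beta> \<notin> \<Phi>" "s \<beta> = \<beta> \<or> s \<beta> = - \<beta>"
    unfolding complex_root_def real_root_def imaginary_root_def by blast
  then show ?thesis
  proof cases
    case 1
    then have "s \<beta> \<in> N"
      using assms(3) root_pos_or_neg[OF \<open>s \<beta> \<in> R\<close>] by blast
    then show ?thesis
      by (rule coord_neg_nonpos)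
  next
    case 2
    then have "s \<beta> \<in> N"
      using assms(2) V_fit unfolding V_fit_def by blast
    then show ?thesis
      by (rule coord_neg_nonpos)
  next
    case 3
    then have "\<beta> \<noteq> \<phi>"
      using assms(1) by blast
    with 3 show ?thesis
      using coord_simple[OF assms(2)] by (auto simp: coord_uminus)
  qed
qed

lemma coord_s_nonpos:
  assumes "\<phi> \<in> \<Phi>" "\<delta> \<in> P" "supp R C \<delta> \<inter> \<Phi>pos = {}"
  shows "coord (s \<delta>) \<phi> \<le> 0"
proof (rule linear_nonpos_if_nonpos_on_supp[OF _ assms(2)])
  show "linear (\<lambda>v. coord (s v) \<phi>)"
    using linear_compose[OF linear_s linear_coord] by (simp add: o_def)
  show "coord (s \<beta>) \<phi> \<le> 0" if "\<beta> \<in> supp R C \<delta>" for \<beta>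
    using that assms coord_s_simple_nonpos unfolding supp_def by blast
qed

lemma uminus_s_notin_Q:
  assumes "\<phi> \<in> \<Phi>pos"
  shows "- s \<phi> \<notin> Q"
proof
  assume "- s \<phi> \<in> Q"
  moreover have "- s \<phi> \<in> N"
    using assms uminus_neg_iff by simp
  ultimately have "supp R C (s \<phi>) \<inter> \<Phi> = {}"
    using Q_Phi_eq_Q neg_mem_Q_Phi_iff supp_uminus by metis
  then have "coord (s (s \<phi>)) \<phi> \<le> 0"
    using coord_s_nonpos[of \<phi> "s \<phi>"] assms by blast
  moreover have "coord (s (s \<phi>)) \<phi> = 1"
    using assms by (simp add: s_s coord_simple mem_Phi_iff)
  ultimately show False
    by simp
qed

lemma Q_Phi_subset_Q_union_s: "Q_Phi R C \<Phi>pos \<subseteq> Q \<union> s ` Q"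
proof
  fix \<alpha> assume \<alpha>: "\<alpha> \<in> Q_Phi R C \<Phi>pos"
  show "\<alpha> \<in> Q \<union> s ` Q"
  proof (cases "\<alpha> \<in> P")
    case True
    then show ?thesis
      using pos_roots_subset_Q by blast
  next
    case False
    with \<alpha> have \<gamma>: "- \<alpha> \<in> P" "supp R C (- \<alpha>) \<inter> \<Phi>pos = {}"
      unfolding Q_Phi_def by (auto simp: supp_uminus uminus_pos_iff)
    have "- s (- \<alpha>) \<in> Q"
    proof (cases "s (- \<alpha>) \<in> P")
      case True
      have "coord (s (- \<alpha>)) \<phi> = 0" if "\<phi> \<in> \<Phi>" for \<phi>
        using coord_s_nonpos[OF that \<gamma>] coord_pos_nonneg[OF True] by (rule order_antisym)
      then have "supp R C (s (- \<alpha>)) \<inter> \<Phi> = {}"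
        by (auto simp: mem_supp_iff)
      then show ?thesis
        using uminus_mem_if_supp_disjoint[OF closed pos_roots_subset_Q True] by blast
    next
      case False
      then have "s (- \<alpha>) \<in> N"
        using root_pos_or_neg s_root \<gamma>(1) pos_roots_subset by blast
      then show ?thesis
        using pos_roots_subset_Q uminus_pos_iff by blast
    qed
    moreover have "s (- s (- \<alpha>)) = \<alpha>"
      by (simp add: s_uminus s_s)
    ultimately show ?thesis
      by (metis UnI2 image_eqI)
  qed
qed

lemma Q_subset_Q_Phi: "Q \<subseteq> Q_Phi R C \<Phi>pos"
  using Q_Phi_antimono[of \<Phi>pos \<Phi>] Q_Phi_eq_Q by auto

lemma closed_between_subset_Q_Phi:
  assumes "closed_subset R Q'" "Q \<subseteq> Q'" "Q' \<subseteq> Q \<union> s ` Q"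
  shows "Q' \<subseteq> Q_Phi R C \<Phi>pos"
proof -
  have "\<Phi>pos \<subseteq> Phi_C R Q' C"
  proof
    fix \<phi> assume \<phi>: "\<phi> \<in> \<Phi>pos"
    have "- \<phi> \<notin> Q'"
    proof
      assume "- \<phi> \<in> Q'"
      moreover have "- \<phi> \<notin> Q"
        using \<phi> mem_Phi_iff by blast
      ultimately obtain q where "q \<in> Q" "- \<phi> = s q"
        using assms(3) by blast
      then have "- s \<phi> \<in> Q"
        by (metis s_s s_uminus)
      then show False
        using uminus_s_notin_Q \<phi> by blast
    qed
    then show "\<phi> \<in> Phi_C R Q' C"
      using \<phi> assms(2) by (auto simp: Phi_C_def nilpotent_part_def)
  qed
  then have "Q_Phi R C (Phi_C R Q' C) \<subseteq> Q_Phi R C \<Phi>pos"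
    by (rule Q_Phi_antimono)
  moreover have "Q_Phi R C (Phi_C R Q' C) = Q'"
    using Q_Phi_Phi_C_eq assms(1,2) pos_roots_subset_Q by blast
  ultimately show ?thesis
    by simp
qed

lemma levi_nondegenerate_iff: "levi_nondegenerate R Q s \<longleftrightarrow> s ` \<Phi> \<subseteq> P"
proof
  assume levi: "levi_nondegenerate R Q s"
  show "s ` \<Phi> \<subseteq> P"
  proof (rule ccontr)
    assume "\<not> s ` \<Phi> \<subseteq> P"
    then obtain \<phi> where \<phi>: "\<phi> \<in> \<Phi>" "s \<phi> \<notin> P"
      by blast
    then have "- \<phi> \<in> N" "supp R C (- \<phi>) \<inter> \<Phi>pos = {}"
      using simple_roots_subset by (auto simp: mem_Phi_iff uminus_neg_iff supp_uminus supp_simple)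
    then have "- \<phi> \<in> Q_Phi R C \<Phi>pos"
      using neg_mem_Q_Phi_iff by blast
    moreover have "- \<phi> \<notin> Q"
      using \<phi> mem_Phi_iff by blast
    ultimately have "Q \<subset> Q_Phi R C \<Phi>pos"
      using Q_subset_Q_Phi by blast
    moreover have "parabolic_subset R (Q_Phi R C \<Phi>pos)"
      using parabolic_if_closed_pos[OF closed_Q_Phi pos_roots_subset_Q_Phi] .
    ultimately show False
      using levi Q_Phi_subset_Q_union_s unfolding levi_nondegenerate_def by blast
  qed
next
  assume "s ` \<Phi> \<subseteq> P"
  then have "\<Phi>pos = \<Phi>"
    by blast
  then have "Q' \<subseteq> Q" if "parabolic_subset R Q'" "Q \<subseteq> Q'" "Q' \<subseteq> Q \<union> s ` Q" for Q'
    using closed_between_subset_Q_Phi[of Q'] that Q_Phi_eq_Q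
    unfolding parabolic_subset_def by auto
  then show "levi_nondegenerate R Q s"
    unfolding levi_nondegenerate_def by blast
qed

lemma s_Phi_pos_iff_nilpotent: "s ` \<Phi> \<subseteq> P \<longleftrightarrow> s ` \<Phi> \<subseteq> nilpotent_part Q"
proof
  assume "s ` \<Phi> \<subseteq> P"
  then show "s ` \<Phi> \<subseteq> nilpotent_part Q"
    using uminus_s_notin_Q pos_roots_subset_Q unfolding nilpotent_part_def by blast
next
  assume nil: "s ` \<Phi> \<subseteq> nilpotent_part Q"
  show "s ` \<Phi> \<subseteq> P"
  proof
    fix \<alpha> assume "\<alpha> \<in> s ` \<Phi>"
    then have "\<alpha> \<in> Q" "- \<alpha> \<notin> Q"
      using nil by (auto simp: nilpotent_part_def)
    then show "\<alpha> \<in> P"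
      using root_pos_or_neg closed_subset_subset[OF closed] uminus_pos_iff pos_roots_subset_Q
      by blast
  qed
qed

end

theorem theorem4p30:
  fixes R Q C :: "'a::euclidean_space set" and s :: "'a \<Rightarrow> 'a"
  assumes "reduced_root_system R"
    and "parabolic_subset R Q"
    and "root_involution R s"
    and "V_fit R Q s C"
  defines "\<Phi>sp \<equiv> {\<alpha>\<in>Phi_C R Q C. s \<alpha> \<in> pos_roots R C}"
  shows "closed_subset R (Q_Phi R C \<Phi>sp) \<and> Q \<subseteq> Q_Phi R C \<Phi>sp \<and>
           Q_Phi R C \<Phi>sp \<subseteq> Q \<union> s ` Q \<and>
           (\<forall>Q'. closed_subset R Q' \<and> Q \<subseteq> Q' \<and> Q' \<subseteq> Q \<union> s ` Q \<longrightarrow>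
                 Q' \<subseteq> Q_Phi R C \<Phi>sp) \<and>
         (levi_nondegenerate R Q s \<longleftrightarrow> s ` Phi_C R Q C \<subseteq> pos_roots R C) \<and>
         (s ` Phi_C R Q C \<subseteq> pos_roots R C \<longleftrightarrow> s ` Phi_C R Q C \<subseteq> nilpotent_part Q)"
proof -
  interpret V_fit_chamber R C Q s
    using assms(1-4) by unfold_locales
      (auto simp: reduced_root_system_def parabolic_subset_def V_fit_def admissible_def)
  show ?thesis
    unfolding \<Phi>sp_def
  proof (intro conjI allI impI closed_Q_Phi Q_subset_Q_Phi Q_Phi_subset_Q_union_s
      levi_nondegenerate_iff s_Phi_pos_iff_nilpotent)
    show "Q' \<subseteq> Q_Phi R C \<Phi>pos" if "closed_subset R Q' \<and> Q \<subseteq> Q' \<and> Q' \<subseteq> Q \<union> s ` Q" for Q'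
      using that closed_between_subset_Q_Phi by blast
  qed
qed

end
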